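(* Let $d\ge 3$, let $\mathcal{H}_A=\mathcal{H}_B=\mathbb{C}^d$ with fixed orthonormal bases $|1\rangle,\dots,|d\rangle$, and $\mathcal{H}=\mathcal{H}_A\otimes\mathcal{H}_B$. The following are equivalent: (i) none of the Werner states $\rho_W(t)=1-tF$ with $t\in(1/d,1/2]$ is $2$-distillable; (ii) the function $$\Phi(x_1,\dots,x_d,y_1,\dots,y_d,u_1,\dots,u_d,v_1,\dots,v_d)=\langle\psi|\,\sigma_W^{\otimes 2}\,|\psi\rangle,\qquad |\psi\rangle=\sum_{i,j=1}^d|i,j,x_i,u_j\rangle+\sum_{i,j=1}^d|i,j,y_i,v_j\rangle,$$ is nonnegative for all vectors $x_i,y_i\in\mathcal{H}_A$ and $u_i,v_i\in\mathcal{H}_B$ ($i=1,\dots,d$), where $\sigma_W=1-\tfrac{d}{2}P$.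
   Context: The flip operator is $F=\sum_{i,j}|i,j\rangle\langle j,i|$ on $\mathcal{H}$, and $P=\frac1d\sum_{i,j}|i,i\rangle\langle j,j|$ is the projector onto the maximally entangled state; $dP$ is the partial transpose $1\otimes T(F)$, so the partial transpose of $\rho_W(t)$ is $1-tdP$. In $|i,j,x_i,u_j\rangle$ the four tensor factors are, in order, Alice's first copy $\mathcal{H}_A$, Bob's first copy $\mathcal{H}_B$, Alice's second copy $\mathcal{H}_A$, Bob's second copy $\mathcal{H}_B$; thus $\sigma_W^{\otimes 2}$ acts on $\mathcal{H}\otimes\mathcal{H}$ with the first $\sigma_W$ on the first two factors and the second on the last two. A bipartite state $\rho$ on $\mathcal{H}$ is called $k$-distillable if there exists a (non-normalized) vector $|\psi\rangle\in\mathcal{H}^{\otimes k}$, regarded as a bipartite vector in $\mathcal{H}_A^{\otimes k}\otimes\mathcal{H}_B^{\otimes k}$, of Schmidt rank at most two such that $\langle\psi|\sigma^{\otimes k}|\psi\rangle<0$, where $\sigma=1\otimes T(\rho)$ is the partial transpose of $\rho$. *)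

theory Defs
  imports Complex_Main "HOL-Library.Complex_Order" "HOL-Library.Cardinality"
begin

text \<open>The local Hilbert spaces H_A = H_B = C^d have orthonormal basis indexed by the
finite type 'n, d = CARD('n).  A vector of H = H_A (x) H_B is a function 'n \<times> 'n \<Rightarrow> complex,
an operator on H is its matrix  ('n \<times> 'n) \<Rightarrow> ('n \<times> 'n) \<Rightarrow> complex  in the product basis.\<close>

type_synonym 'n op = "('n \<times> 'n) \<Rightarrow> ('n \<times> 'n) \<Rightarrow> complex"

definition id_op :: "'n op" where
  "id_op p q = (if p = q then 1 else 0)"

definition flip :: "'n op" where
  "flip p q = (if fst p = snd q \<and> snd p = fst q then 1 else 0)"

definition max_ent_proj :: "'n::finite op" where
  "max_ent_proj p q = (if fst p = snd p \<and> fst q = snd q then 1 / of_nat CARD('n) else 0)"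

definition partial_transpose :: "'n op \<Rightarrow> 'n op" where
  "partial_transpose \<rho> p q = \<rho> (fst p, snd q) (fst q, snd p)"

definition werner :: "real \<Rightarrow> 'n op" where
  "werner t p q = id_op p q - complex_of_real t * flip p q"

definition sigma_W :: "'n::finite op" where
  "sigma_W p q = id_op p q - (of_nat CARD('n) / 2) * max_ent_proj p q"

text \<open>Vectors of H^{(x) k}, regarded as bipartite vectors of H_A^{(x) k} (x) H_B^{(x) k}:
functions psi a b where a (Alice's indices) and b (Bob's indices) are lists of length k;
the coordinate psi a b is the coefficient of |a_1,b_1,...,a_k,b_k>.\<close>

definition idx :: "nat \<Rightarrow> 'n list set" where
  "idx k = {a. length a = k}"

definition tensor_power_form :: "nat \<Rightarrow> 'n op \<Rightarrow> ('n list \<Rightarrow> 'n list \<Rightarrow> complex) \<Rightarrow> complex" where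
  "tensor_power_form k \<sigma> \<psi> =
     (\<Sum>a\<in>idx k. \<Sum>b\<in>idx k. \<Sum>a'\<in>idx k. \<Sum>b'\<in>idx k.
        cnj (\<psi> a b) * (\<Prod>i<k. \<sigma> (a ! i, b ! i) (a' ! i, b' ! i)) * \<psi> a' b')"

definition schmidt_rank_le2 :: "nat \<Rightarrow> ('n list \<Rightarrow> 'n list \<Rightarrow> complex) \<Rightarrow> bool" where
  "schmidt_rank_le2 k \<psi> \<longleftrightarrow>
     (\<exists>\<alpha>1 \<beta>1 \<alpha>2 \<beta>2 :: 'n list \<Rightarrow> complex.
        \<forall>a\<in>idx k. \<forall>b\<in>idx k. \<psi> a b = \<alpha>1 a * \<beta>1 b + \<alpha>2 a * \<beta>2 b)"

definition k_distillable :: "nat \<Rightarrow> 'n::finite op \<Rightarrow> bool" where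
  "k_distillable k \<rho> \<longleftrightarrow>
     (\<exists>\<psi>. schmidt_rank_le2 k \<psi> \<and> tensor_power_form k (partial_transpose \<rho>) \<psi> < 0)"

text \<open>Phi = <psi| sigma_W^{(x) 2} |psi> with
psi = sum_{i,j} |i,j,x_i,u_j> + sum_{i,j} |i,j,y_i,v_j>; factors A1,B1,A2,B2.\<close>
definition Phi :: "('n::finite \<Rightarrow> 'n \<Rightarrow> complex) \<Rightarrow> ('n \<Rightarrow> 'n \<Rightarrow> complex) \<Rightarrow>
                   ('n \<Rightarrow> 'n \<Rightarrow> complex) \<Rightarrow> ('n \<Rightarrow> 'n \<Rightarrow> complex) \<Rightarrow> complex" where
  "Phi x y u v =
     (let \<psi> = (\<lambda>p q r s. x p r * u q s + y p r * v q s) in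
      (\<Sum>p\<in>UNIV. \<Sum>q\<in>UNIV. \<Sum>r\<in>UNIV. \<Sum>s\<in>UNIV.
       \<Sum>p'\<in>UNIV. \<Sum>q'\<in>UNIV. \<Sum>r'\<in>UNIV. \<Sum>s'\<in>UNIV.
         cnj (\<psi> p q r s) * sigma_W (p, q) (p', q') * sigma_W (r, s) (r', s') * \<psi> p' q' r' s'))"

end

theory Submission
  imports Defs
begin

text \<open>
  With E = dP the unnormalised projector onto \<Sum>i |i,i>, the partial transpose of
  \<rho>W(t) is 1 - tE, and for any \<psi> in H \<otimes> H the number <\<psi>|(1 - tE)\<otimes>(1 - tE)|\<psi>> is the
  real quadratic N - t (A1 + A2) + t^2 C, where N = |\<psi>|^2, Ak is the squared norm of \<psi>
  contracted with \<Sum>i |i,i> in the k-th copy and C that of the double contraction.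
  At t = 1/2 it is \<Phi>, and t = 1/2 lies in (1/d, 1/2] since d \<ge> 3; this gives (i) \<Longrightarrow> (ii).

  For (ii) \<Longrightarrow> (i) let \<psi> have Schmidt rank two across Alice | Bob. Then each contraction is
  the trace of a matrix of rank two, so Ak \<le> 2N (Cauchy-Schwarz after making the two Alice
  factors orthogonal). With s = 2t the quadratic equals
  s^2 \<cdot> (its value at 1/2) + (1 - s)((1 + s) N - t (A1 + A2)),
  and both summands are nonnegative for 0 \<le> s \<le> 1.
\<close>

lemma sum_mult_sq_le:
  fixes x y :: "'a \<Rightarrow> real"
  shows "(\<Sum>i\<in>A. x i * y i)\<^sup>2 \<le> (\<Sum>i\<in>A. (x i)\<^sup>2) * (\<Sum>i\<in>A. (y i)\<^sup>2)"
proof -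
  let ?X = "\<Sum>i\<in>A. (x i)\<^sup>2" and ?Y = "\<Sum>i\<in>A. (y i)\<^sup>2"
  have XY: "?X * ?Y = (\<Sum>i\<in>A. \<Sum>j\<in>A. (x i)\<^sup>2 * (y j)\<^sup>2)"
    by (rule sum_product)
  have YX: "?X * ?Y = (\<Sum>i\<in>A. \<Sum>j\<in>A. (x j)\<^sup>2 * (y i)\<^sup>2)"
    by (subst sum.swap) (rule XY)
  have sq: "(\<Sum>i\<in>A. x i * y i)\<^sup>2 = (\<Sum>i\<in>A. \<Sum>j\<in>A. (x i * y i) * (x j * y j))"
    by (simp add: power2_eq_square sum_product)
  have "0 \<le> (\<Sum>i\<in>A. \<Sum>j\<in>A. (x i * y j - x j * y i)\<^sup>2)"
    by (intro sum_nonneg) simp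
  also have "\<dots> = (\<Sum>i\<in>A. \<Sum>j\<in>A. (x i)\<^sup>2 * (y j)\<^sup>2 + (x j)\<^sup>2 * (y i)\<^sup>2 - 2 * ((x i * y i) * (x j * y j)))"
    by (simp add: power2_eq_square algebra_simps)
  also have "\<dots> = (\<Sum>i\<in>A. \<Sum>j\<in>A. (x i)\<^sup>2 * (y j)\<^sup>2) + (\<Sum>i\<in>A. \<Sum>j\<in>A. (x j)\<^sup>2 * (y i)\<^sup>2)
      - 2 * (\<Sum>i\<in>A. \<Sum>j\<in>A. (x i * y i) * (x j * y j))"
    by (simp add: sum.distrib sum_subtractf sum_distrib_left)
  also have "\<dots> = 2 * (?X * ?Y - (\<Sum>i\<in>A. x i * y i)\<^sup>2)"
    unfolding XY[symmetric] YX[symmetric] sq by simp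
  finally show ?thesis by simp
qed

lemma cmod_sum_mult_sq_le:
  fixes a b :: "'a \<Rightarrow> complex"
  shows "(cmod (\<Sum>i\<in>A. a i * b i))\<^sup>2 \<le> (\<Sum>i\<in>A. (cmod (a i))\<^sup>2) * (\<Sum>i\<in>A. (cmod (b i))\<^sup>2)"
proof -
  have "cmod (\<Sum>i\<in>A. a i * b i) \<le> (\<Sum>i\<in>A. cmod (a i) * cmod (b i))"
    using norm_sum[of "\<lambda>i. a i * b i" A] by (simp add: norm_mult)
  then have "(cmod (\<Sum>i\<in>A. a i * b i))\<^sup>2 \<le> (\<Sum>i\<in>A. cmod (a i) * cmod (b i))\<^sup>2"
    by (simp add: power_mono)
  also have "\<dots> \<le> (\<Sum>i\<in>A. (cmod (a i))\<^sup>2) * (\<Sum>i\<in>A. (cmod (b i))\<^sup>2)"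
    by (rule sum_mult_sq_le)
  finally show ?thesis .
qed

lemma complex_of_real_nonneg_iff: "0 \<le> complex_of_real f \<longleftrightarrow> 0 \<le> f"
  by (simp add: less_eq_complex_def)

lemma complex_of_real_neg_iff: "complex_of_real f < 0 \<longleftrightarrow> f < 0"
  by (simp add: less_complex_def)

lemma of_real_cmod_sq: "complex_of_real ((cmod z)\<^sup>2) = cnj z * z"
  by (metis complex_norm_square mult.commute)

lemma cmod_trace_rank2_sq_le_orth:
  fixes a b c e :: "'a \<Rightarrow> complex"
  assumes "finite A" and orth: "(\<Sum>i\<in>A. cnj (a i) * c i) = 0"
  shows "(cmod (\<Sum>i\<in>A. a i * b i + c i * e i))\<^sup>2
         \<le> 2 * (\<Sum>p\<in>A. \<Sum>q\<in>A. (cmod (a p * b q + c p * e q))\<^sup>2)"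
proof -
  let ?n = "\<lambda>f. \<Sum>i\<in>A. (cmod (f i))\<^sup>2"
  have orth': "(\<Sum>i\<in>A. cnj (c i) * a i) = 0"
    using arg_cong[OF orth, of cnj] by (simp add: mult.commute)
  have "complex_of_real (\<Sum>p\<in>A. \<Sum>q\<in>A. (cmod (a p * b q + c p * e q))\<^sup>2)
      = (\<Sum>p\<in>A. \<Sum>q\<in>A. (cnj (a p) * a p) * (cnj (b q) * b q) + (cnj (c p) * c p) * (cnj (e q) * e q)
            + (cnj (a p) * c p) * (cnj (b q) * e q) + (cnj (c p) * a p) * (cnj (e q) * b q))"
    by (simp only: of_real_sum of_real_cmod_sq) (simp add: algebra_simps)
  also have "\<dots> = complex_of_real (?n a * ?n b + ?n c * ?n e)"
    by (simp only: sum.distrib sum_product[symmetric] orth orth' of_real_add of_real_mult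
        of_real_sum of_real_cmod_sq) simp
  finally have norm_eq: "(\<Sum>p\<in>A. \<Sum>q\<in>A. (cmod (a p * b q + c p * e q))\<^sup>2) = ?n a * ?n b + ?n c * ?n e"
    using of_real_eq_iff by blast
  have "(cmod (\<Sum>i\<in>A. a i * b i + c i * e i))\<^sup>2
      \<le> (cmod (\<Sum>i\<in>A. a i * b i) + cmod (\<Sum>i\<in>A. c i * e i))\<^sup>2"
    by (simp add: sum.distrib power_mono norm_triangle_ineq)
  also have "\<dots> \<le> 2 * (cmod (\<Sum>i\<in>A. a i * b i))\<^sup>2 + 2 * (cmod (\<Sum>i\<in>A. c i * e i))\<^sup>2"
    by (smt (verit) sum_squares_bound power2_sum)
  also have "\<dots> \<le> 2 * (?n a * ?n b + ?n c * ?n e)"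
    using add_mono[OF cmod_sum_mult_sq_le[of a b A] cmod_sum_mult_sq_le[of c e A]]
    by (simp add: distrib_left)
  finally show ?thesis
    using norm_eq by simp
qed

lemma cmod_trace_rank2_sq_le:
  fixes a b c e :: "'a \<Rightarrow> complex"
  assumes "finite A"
  shows "(cmod (\<Sum>i\<in>A. a i * b i + c i * e i))\<^sup>2
         \<le> 2 * (\<Sum>p\<in>A. \<Sum>q\<in>A. (cmod (a p * b q + c p * e q))\<^sup>2)"
proof (cases "\<forall>i\<in>A. a i = 0")
  case True
  then have "(\<Sum>i\<in>A. cnj (a i) * c i) = 0" by simp
  with assms show ?thesis by (rule cmod_trace_rank2_sq_le_orth)
next
  case False
  then obtain i where i: "i \<in> A" "a i \<noteq> 0" by blast
  define na where "na = (\<Sum>i\<in>A. cnj (a i) * a i)"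
  have "0 < (\<Sum>i\<in>A. (cmod (a i))\<^sup>2)"
    using i by (intro sum_pos2[OF assms i(1)]) auto
  moreover have "complex_of_real (\<Sum>i\<in>A. (cmod (a i))\<^sup>2) = na"
    unfolding na_def by (simp only: of_real_sum of_real_cmod_sq)
  ultimately have "na \<noteq> 0"
    by (metis less_irrefl of_real_eq_0_iff)
  define \<mu> where "\<mu> = (\<Sum>i\<in>A. cnj (a i) * c i) / na"
  have "(\<Sum>i\<in>A. cnj (a i) * (c i - \<mu> * a i)) = (\<Sum>i\<in>A. cnj (a i) * c i) - \<mu> * na"
    unfolding na_def by (simp add: right_diff_distrib sum_subtractf sum_distrib_left mult_ac)
  also have "\<dots> = 0"
    using \<open>na \<noteq> 0\<close> by (simp add: \<mu>_def)
  finally have orth: "(\<Sum>i\<in>A. cnj (a i) * (c i - \<mu> * a i)) = 0" .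
  \<comment> \<open>moving the part of c parallel to a over to b does not change a \<otimes> b + c \<otimes> e\<close>
  have same: "a p * (b q + \<mu> * e q) + (c p - \<mu> * a p) * e q = a p * b q + c p * e q" for p q
    by (simp add: algebra_simps)
  show ?thesis
    using cmod_trace_rank2_sq_le_orth[OF assms orth, of "\<lambda>q. b q + \<mu> * e q" e]
    by (simp only: same)
qed

lemma sum_if_const_cond: "(\<Sum>x\<in>A. if P then f x else 0) = (if P then (\<Sum>x\<in>A. f x) else 0)"
  by simp

text \<open>\<psi> p q r s is the coefficient of |p,q,r,s>, the factors being A1, B1, A2, B2 as in Phi.\<close>

type_synonym 'n two_copy_vec = "'n \<Rightarrow> 'n \<Rightarrow> 'n \<Rightarrow> 'n \<Rightarrow> complex"

text \<open>E = dP = partial_transpose flip.\<close>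

definition max_ent :: "'n op" where
  "max_ent p q = (if fst p = snd p \<and> fst q = snd q then 1 else 0)"

definition one_minus_max_ent :: "real \<Rightarrow> 'n op" where
  "one_minus_max_ent c p q = id_op p q - complex_of_real c * max_ent p q"

definition two_copy_form :: "'n::finite op \<Rightarrow> 'n two_copy_vec \<Rightarrow> complex" where
  "two_copy_form \<sigma> \<psi> = (\<Sum>p\<in>UNIV. \<Sum>q\<in>UNIV. \<Sum>r\<in>UNIV. \<Sum>s\<in>UNIV.
       \<Sum>p'\<in>UNIV. \<Sum>q'\<in>UNIV. \<Sum>r'\<in>UNIV. \<Sum>s'\<in>UNIV.
         cnj (\<psi> p q r s) * \<sigma> (p, q) (p', q') * \<sigma> (r, s) (r', s') * \<psi> p' q' r' s')"

definition sq_norm :: "'n::finite two_copy_vec \<Rightarrow> real" where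
  "sq_norm \<psi> = (\<Sum>p\<in>UNIV. \<Sum>q\<in>UNIV. \<Sum>r\<in>UNIV. \<Sum>s\<in>UNIV. (cmod (\<psi> p q r s))\<^sup>2)"

definition max_ent_overlap_fst :: "'n::finite two_copy_vec \<Rightarrow> real" where
  "max_ent_overlap_fst \<psi> = (\<Sum>r\<in>UNIV. \<Sum>s\<in>UNIV. (cmod (\<Sum>i\<in>UNIV. \<psi> i i r s))\<^sup>2)"

definition max_ent_overlap_snd :: "'n::finite two_copy_vec \<Rightarrow> real" where
  "max_ent_overlap_snd \<psi> = (\<Sum>p\<in>UNIV. \<Sum>q\<in>UNIV. (cmod (\<Sum>j\<in>UNIV. \<psi> p q j j))\<^sup>2)"

definition max_ent_overlap_both :: "'n::finite two_copy_vec \<Rightarrow> real" where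
  "max_ent_overlap_both \<psi> = (cmod (\<Sum>i\<in>UNIV. \<Sum>j\<in>UNIV. \<psi> i i j j))\<^sup>2"

definition werner_form :: "real \<Rightarrow> 'n::finite two_copy_vec \<Rightarrow> real" where
  "werner_form c \<psi> = sq_norm \<psi> - c * (max_ent_overlap_fst \<psi> + max_ent_overlap_snd \<psi>)
     + c\<^sup>2 * max_ent_overlap_both \<psi>"

lemma one_minus_max_ent_tensor_apply:
  fixes \<psi> :: "'n::finite two_copy_vec"
  shows "(\<Sum>p'\<in>UNIV. \<Sum>q'\<in>UNIV. \<Sum>r'\<in>UNIV. \<Sum>s'\<in>UNIV.
            one_minus_max_ent c (p,q) (p',q') * one_minus_max_ent c (r,s) (r',s') * \<psi> p' q' r' s')
   = \<psi> p q r s - of_real c * (if p = q then (\<Sum>i\<in>UNIV. \<psi> i i r s) else 0)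
      - of_real c * (if r = s then (\<Sum>j\<in>UNIV. \<psi> p q j j) else 0)
      + (of_real c)\<^sup>2 * (if p = q \<and> r = s then (\<Sum>i\<in>UNIV. \<Sum>j\<in>UNIV. \<psi> i i j j) else 0)"
proof -
  have expand: "one_minus_max_ent c (p,q) (p',q') * one_minus_max_ent c (r,s) (r',s') * \<psi> p' q' r' s'
     = id_op (p,q) (p',q') * id_op (r,s) (r',s') * \<psi> p' q' r' s'
       - of_real c * (max_ent (p,q) (p',q') * id_op (r,s) (r',s') * \<psi> p' q' r' s')
       - of_real c * (id_op (p,q) (p',q') * max_ent (r,s) (r',s') * \<psi> p' q' r' s')
       + (of_real c)\<^sup>2 * (max_ent (p,q) (p',q') * max_ent (r,s) (r',s') * \<psi> p' q' r' s')"
    for p' q' r' s'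
    by (simp add: one_minus_max_ent_def algebra_simps power2_eq_square)
  have id_op_pair: "id_op (p,q) (p',q') = (if p = p' then 1 else 0) * (if q = q' then 1 else 0)"
    for p q p' q' :: 'n
    by (simp add: id_op_def)
  have max_ent_pair: "max_ent (p,q) (p',q') = (if p = q then 1 else 0) * (if p' = q' then 1 else 0)"
    for p q p' q' :: 'n
    by (simp add: max_ent_def)
  note delta_simps = id_op_pair max_ent_pair if_distrib[where f="\<lambda>x. x * _"]
    sum.delta sum.delta' sum_if_const_cond
  have "(\<Sum>p'\<in>UNIV. \<Sum>q'\<in>UNIV. \<Sum>r'\<in>UNIV. \<Sum>s'\<in>UNIV.
          id_op (p,q) (p',q') * id_op (r,s) (r',s') * \<psi> p' q' r' s') = \<psi> p q r s"
    by (simp add: delta_simps cong: if_cong)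
  moreover have "(\<Sum>p'\<in>UNIV. \<Sum>q'\<in>UNIV. \<Sum>r'\<in>UNIV. \<Sum>s'\<in>UNIV.
          max_ent (p,q) (p',q') * id_op (r,s) (r',s') * \<psi> p' q' r' s')
      = (if p = q then (\<Sum>i\<in>UNIV. \<psi> i i r s) else 0)"
    by (simp add: delta_simps cong: if_cong)
  moreover have "(\<Sum>p'\<in>UNIV. \<Sum>q'\<in>UNIV. \<Sum>r'\<in>UNIV. \<Sum>s'\<in>UNIV.
          id_op (p,q) (p',q') * max_ent (r,s) (r',s') * \<psi> p' q' r' s')
      = (if r = s then (\<Sum>j\<in>UNIV. \<psi> p q j j) else 0)"
    by (simp add: delta_simps cong: if_cong)
  moreover have "(\<Sum>p'\<in>UNIV. \<Sum>q'\<in>UNIV. \<Sum>r'\<in>UNIV. \<Sum>s'\<in>UNIV.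
          max_ent (p,q) (p',q') * max_ent (r,s) (r',s') * \<psi> p' q' r' s')
      = (if p = q \<and> r = s then (\<Sum>i\<in>UNIV. \<Sum>j\<in>UNIV. \<psi> i i j j) else 0)"
    by (simp add: delta_simps cong: if_cong)
  ultimately show ?thesis
    by (simp only: expand sum.distrib sum_subtractf sum_distrib_left[symmetric])
qed

lemma max_ent_form_fst:
  fixes \<psi> :: "'n::finite two_copy_vec"
  shows "(\<Sum>p\<in>UNIV. \<Sum>q\<in>UNIV. \<Sum>r\<in>UNIV. \<Sum>s\<in>UNIV.
            cnj (\<psi> p q r s) * (if p = q then (\<Sum>i\<in>UNIV. \<psi> i i r s) else 0))
     = complex_of_real (max_ent_overlap_fst \<psi>)"
proof -
  have "(\<Sum>p\<in>UNIV. \<Sum>q\<in>UNIV. \<Sum>r\<in>UNIV. \<Sum>s\<in>UNIV.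
            cnj (\<psi> p q r s) * (if p = q then (\<Sum>i\<in>UNIV. \<psi> i i r s) else 0))
     = (\<Sum>p\<in>UNIV. \<Sum>r\<in>UNIV. \<Sum>s\<in>UNIV. cnj (\<psi> p p r s) * (\<Sum>i\<in>UNIV. \<psi> i i r s))"
    by (simp add: if_distrib[where f="\<lambda>x. _ * x"] sum.delta sum.delta' sum_if_const_cond
        cong: if_cong)
  also have "\<dots> = (\<Sum>r\<in>UNIV. \<Sum>s\<in>UNIV. \<Sum>p\<in>UNIV. cnj (\<psi> p p r s) * (\<Sum>i\<in>UNIV. \<psi> i i r s))"
    by (subst sum.swap) (rule sum.cong[OF refl], rule sum.swap)
  also have "\<dots> = (\<Sum>r\<in>UNIV. \<Sum>s\<in>UNIV. cnj (\<Sum>i\<in>UNIV. \<psi> i i r s) * (\<Sum>i\<in>UNIV. \<psi> i i r s))"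
    by (simp add: sum_distrib_right)
  finally show ?thesis
    by (simp only: max_ent_overlap_fst_def of_real_sum of_real_cmod_sq)
qed

lemma max_ent_form_snd:
  fixes \<psi> :: "'n::finite two_copy_vec"
  shows "(\<Sum>p\<in>UNIV. \<Sum>q\<in>UNIV. \<Sum>r\<in>UNIV. \<Sum>s\<in>UNIV.
            cnj (\<psi> p q r s) * (if r = s then (\<Sum>j\<in>UNIV. \<psi> p q j j) else 0))
     = complex_of_real (max_ent_overlap_snd \<psi>)"
proof -
  have "(\<Sum>p\<in>UNIV. \<Sum>q\<in>UNIV. \<Sum>r\<in>UNIV. \<Sum>s\<in>UNIV.
            cnj (\<psi> p q r s) * (if r = s then (\<Sum>j\<in>UNIV. \<psi> p q j j) else 0))
     = (\<Sum>p\<in>UNIV. \<Sum>q\<in>UNIV. cnj (\<Sum>j\<in>UNIV. \<psi> p q j j) * (\<Sum>j\<in>UNIV. \<psi> p q j j))"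
    by (simp add: if_distrib[where f="\<lambda>x. _ * x"] sum.delta sum.delta' sum_if_const_cond
        sum_distrib_right cong: if_cong)
  then show ?thesis
    by (simp only: max_ent_overlap_snd_def of_real_sum of_real_cmod_sq)
qed

lemma max_ent_form_both:
  fixes \<psi> :: "'n::finite two_copy_vec"
  shows "(\<Sum>p\<in>UNIV. \<Sum>q\<in>UNIV. \<Sum>r\<in>UNIV. \<Sum>s\<in>UNIV.
            cnj (\<psi> p q r s) * (if p = q \<and> r = s then (\<Sum>i\<in>UNIV. \<Sum>j\<in>UNIV. \<psi> i i j j) else 0))
     = complex_of_real (max_ent_overlap_both \<psi>)"
proof -
  have "(\<Sum>p\<in>UNIV. \<Sum>q\<in>UNIV. \<Sum>r\<in>UNIV. \<Sum>s\<in>UNIV.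
            cnj (\<psi> p q r s) * (if p = q \<and> r = s then (\<Sum>i\<in>UNIV. \<Sum>j\<in>UNIV. \<psi> i i j j) else 0))
     = cnj (\<Sum>i\<in>UNIV. \<Sum>j\<in>UNIV. \<psi> i i j j) * (\<Sum>i\<in>UNIV. \<Sum>j\<in>UNIV. \<psi> i i j j)"
    by (simp add: if_if_eq_conj[symmetric] if_distrib[where f="\<lambda>x. _ * x"] sum.delta sum.delta'
        sum_if_const_cond sum_distrib_right cong: if_cong)
  then show ?thesis
    by (simp only: max_ent_overlap_both_def of_real_cmod_sq)
qed

lemma two_copy_form_one_minus_max_ent:
  "two_copy_form (one_minus_max_ent c) \<psi> = complex_of_real (werner_form c \<psi>)"
proof -
  have "two_copy_form (one_minus_max_ent c) \<psi> = (\<Sum>p\<in>UNIV. \<Sum>q\<in>UNIV. \<Sum>r\<in>UNIV. \<Sum>s\<in>UNIV.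
      cnj (\<psi> p q r s) * (\<Sum>p'\<in>UNIV. \<Sum>q'\<in>UNIV. \<Sum>r'\<in>UNIV. \<Sum>s'\<in>UNIV.
        one_minus_max_ent c (p,q) (p',q') * one_minus_max_ent c (r,s) (r',s') * \<psi> p' q' r' s'))"
    unfolding two_copy_form_def by (simp add: sum_distrib_left mult.assoc)
  also have "\<dots> = (\<Sum>p\<in>UNIV. \<Sum>q\<in>UNIV. \<Sum>r\<in>UNIV. \<Sum>s\<in>UNIV. cnj (\<psi> p q r s) * \<psi> p q r s
      - of_real c * (cnj (\<psi> p q r s) * (if p = q then (\<Sum>i\<in>UNIV. \<psi> i i r s) else 0))
      - of_real c * (cnj (\<psi> p q r s) * (if r = s then (\<Sum>j\<in>UNIV. \<psi> p q j j) else 0))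
      + (of_real c)\<^sup>2 * (cnj (\<psi> p q r s) *
          (if p = q \<and> r = s then (\<Sum>i\<in>UNIV. \<Sum>j\<in>UNIV. \<psi> i i j j) else 0)))"
    by (simp only: one_minus_max_ent_tensor_apply) (simp only: algebra_simps)
  also have "\<dots> = complex_of_real (sq_norm \<psi>) - of_real c * complex_of_real (max_ent_overlap_fst \<psi>)
      - of_real c * complex_of_real (max_ent_overlap_snd \<psi>)
      + (of_real c)\<^sup>2 * complex_of_real (max_ent_overlap_both \<psi>)"
    unfolding sq_norm_def
    by (simp only: sum.distrib sum_subtractf sum_distrib_left[symmetric] max_ent_form_fst
        max_ent_form_snd max_ent_form_both of_real_sum of_real_cmod_sq)
  finally show ?thesis
    by (simp add: werner_form_def algebra_simps)
qed

lemma partial_transpose_werner: "partial_transpose (werner t) = one_minus_max_ent t"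
  by (auto simp: fun_eq_iff partial_transpose_def werner_def one_minus_max_ent_def id_op_def
      flip_def max_ent_def prod_eq_iff)

lemma sigma_W_eq: "sigma_W = (one_minus_max_ent (1/2) :: 'n::finite op)"
proof -
  have "CARD('n) > 0" by simp
  then show ?thesis
    by (auto simp: fun_eq_iff sigma_W_def one_minus_max_ent_def max_ent_proj_def max_ent_def)
qed

lemma sum_idx2: "(\<Sum>a\<in>idx 2. f a) = (\<Sum>p\<in>UNIV. \<Sum>r\<in>UNIV. f [p, r])"
proof -
  have idx2: "idx 2 = (\<lambda>(p, r). [p, r]) ` (UNIV \<times> UNIV)"
    by (auto simp: idx_def length_Suc_conv numeral_2_eq_2 image_iff)
  have inj: "inj_on (\<lambda>(p, r). [p, r]) (UNIV \<times> UNIV)"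
    by (auto simp: inj_on_def)
  have "(\<Sum>a\<in>idx 2. f a) = sum (f \<circ> (\<lambda>(p, r). [p, r])) (UNIV \<times> UNIV)"
    unfolding idx2 by (rule sum.reindex[OF inj])
  also have "\<dots> = (\<Sum>(p, r)\<in>UNIV \<times> UNIV. f [p, r])"
    by (rule sum.cong) auto
  finally show ?thesis
    by (simp only: sum.cartesian_product)
qed

lemma sum_idx2_idx2:
  "(\<Sum>a\<in>idx 2. \<Sum>b\<in>idx 2. g a b)
     = (\<Sum>p\<in>UNIV. \<Sum>q\<in>UNIV. \<Sum>r\<in>UNIV. \<Sum>s\<in>UNIV. g [p, r] [q, s])"
  by (simp add: sum_idx2) (rule sum.cong[OF refl], rule sum.swap)

lemma tensor_power_form_2:
  "tensor_power_form 2 \<sigma> \<psi> = two_copy_form \<sigma> (\<lambda>p q r s. \<psi> [p, r] [q, s])"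
  unfolding tensor_power_form_def two_copy_form_def
  by (simp only: sum_idx2_idx2) (simp add: numeral_2_eq_2 lessThan_Suc mult_ac)

text \<open>The Schmidt cut of H \<otimes> H groups Alice's indices p, r against Bob's q, s.\<close>

definition rank2_vec :: "('n \<Rightarrow> 'n \<Rightarrow> complex) \<Rightarrow> ('n \<Rightarrow> 'n \<Rightarrow> complex) \<Rightarrow>
    ('n \<Rightarrow> 'n \<Rightarrow> complex) \<Rightarrow> ('n \<Rightarrow> 'n \<Rightarrow> complex) \<Rightarrow> 'n two_copy_vec" where
  "rank2_vec x y u v = (\<lambda>p q r s. x p r * u q s + y p r * v q s)"

lemma Phi_eq_werner_form: "Phi x y u v = complex_of_real (werner_form (1/2) (rank2_vec x y u v))"
proof -
  have "Phi x y u v = two_copy_form sigma_W (rank2_vec x y u v)"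
    by (simp add: Phi_def two_copy_form_def rank2_vec_def Let_def)
  then show ?thesis
    by (simp only: sigma_W_eq two_copy_form_one_minus_max_ent)
qed

lemma schmidt_rank_le2_2_iff:
  "schmidt_rank_le2 2 \<psi> \<longleftrightarrow> (\<exists>x y u v. (\<lambda>p q r s. \<psi> [p, r] [q, s]) = rank2_vec x y u v)"
proof
  assume "schmidt_rank_le2 2 \<psi>"
  then obtain \<alpha>1 \<beta>1 \<alpha>2 \<beta>2 where "\<forall>a\<in>idx 2. \<forall>b\<in>idx 2. \<psi> a b = \<alpha>1 a * \<beta>1 b + \<alpha>2 a * \<beta>2 b"
    unfolding schmidt_rank_le2_def by blast
  then have "(\<lambda>p q r s. \<psi> [p, r] [q, s])
      = rank2_vec (\<lambda>p r. \<alpha>1 [p, r]) (\<lambda>p r. \<alpha>2 [p, r]) (\<lambda>q s. \<beta>1 [q, s]) (\<lambda>q s. \<beta>2 [q, s])"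
    by (auto simp: fun_eq_iff rank2_vec_def idx_def)
  then show "\<exists>x y u v. (\<lambda>p q r s. \<psi> [p, r] [q, s]) = rank2_vec x y u v"
    by blast
next
  assume "\<exists>x y u v. (\<lambda>p q r s. \<psi> [p, r] [q, s]) = rank2_vec x y u v"
  then obtain x y u v where xyuv: "\<And>p q r s. \<psi> [p, r] [q, s] = x p r * u q s + y p r * v q s"
    by (auto simp: rank2_vec_def fun_eq_iff)
  have "a = [a ! 0, a ! 1]" if "a \<in> idx 2" for a :: "'a list"
    using that by (auto simp: idx_def length_Suc_conv numeral_2_eq_2)
  then have "\<forall>a\<in>idx 2. \<forall>b\<in>idx 2. \<psi> a b
      = x (a ! 0) (a ! 1) * u (b ! 0) (b ! 1) + y (a ! 0) (a ! 1) * v (b ! 0) (b ! 1)"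
    by (metis xyuv)
  then show "schmidt_rank_le2 2 \<psi>"
    unfolding schmidt_rank_le2_def
    by (intro exI[of _ "\<lambda>a. x (a ! 0) (a ! 1)"] exI[of _ "\<lambda>b. u (b ! 0) (b ! 1)"]
        exI[of _ "\<lambda>a. y (a ! 0) (a ! 1)"] exI[of _ "\<lambda>b. v (b ! 0) (b ! 1)"])
qed

lemma k_distillable_2_werner_iff:
  "k_distillable 2 (werner t :: 'n::finite op) \<longleftrightarrow> (\<exists>x y u v :: 'n \<Rightarrow> 'n \<Rightarrow> complex. werner_form t (rank2_vec x y u v) < 0)"
proof -
  have form: "tensor_power_form 2 (partial_transpose (werner t)) \<psi>
      = complex_of_real (werner_form t (\<lambda>p q r s. \<psi> [p, r] [q, s]))" for \<psi> :: "'n list \<Rightarrow> 'n list \<Rightarrow> complex"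
    by (simp only: tensor_power_form_2 partial_transpose_werner two_copy_form_one_minus_max_ent)
  show ?thesis
  proof
    assume "k_distillable 2 (werner t :: 'n op)"
    then obtain \<psi> :: "'n list \<Rightarrow> 'n list \<Rightarrow> complex"
      where "\<exists>x y u v. (\<lambda>p q r s. \<psi> [p, r] [q, s]) = rank2_vec x y u v"
      and "werner_form t (\<lambda>p q r s. \<psi> [p, r] [q, s]) < 0"
      unfolding k_distillable_def schmidt_rank_le2_2_iff form complex_of_real_neg_iff by blast
    then show "\<exists>x y u v :: 'n \<Rightarrow> 'n \<Rightarrow> complex. werner_form t (rank2_vec x y u v) < 0"
      by metis
  next
    assume "\<exists>x y u v :: 'n \<Rightarrow> 'n \<Rightarrow> complex. werner_form t (rank2_vec x y u v) < 0"
    then obtain x y u v :: "'n \<Rightarrow> 'n \<Rightarrow> complex" where "werner_form t (rank2_vec x y u v) < 0"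
      by blast
    moreover define \<psi> where "\<psi> a b = rank2_vec x y u v (a ! 0) (b ! 0) (a ! 1) (b ! 1)"
      for a b :: "'n list"
    moreover have "(\<lambda>p q r s. \<psi> [p, r] [q, s]) = rank2_vec x y u v"
      by (simp add: \<psi>_def)
    ultimately show "k_distillable 2 (werner t :: 'n op)"
      unfolding k_distillable_def schmidt_rank_le2_2_iff form complex_of_real_neg_iff by metis
  qed
qed

lemma sum_swap_pairs:
  "(\<Sum>r\<in>A. \<Sum>s\<in>B. \<Sum>p\<in>C. \<Sum>q\<in>D. f p q r s) = (\<Sum>p\<in>C. \<Sum>q\<in>D. \<Sum>r\<in>A. \<Sum>s\<in>B. f p q r s)"
proof -
  have "(\<Sum>r\<in>A. \<Sum>s\<in>B. \<Sum>p\<in>C. \<Sum>q\<in>D. f p q r s) = (\<Sum>r\<in>A. \<Sum>p\<in>C. \<Sum>s\<in>B. \<Sum>q\<in>D. f p q r s)"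
    by (rule sum.cong[OF refl], rule sum.swap)
  also have "\<dots> = (\<Sum>p\<in>C. \<Sum>r\<in>A. \<Sum>s\<in>B. \<Sum>q\<in>D. f p q r s)"
    by (rule sum.swap)
  also have "\<dots> = (\<Sum>p\<in>C. \<Sum>r\<in>A. \<Sum>q\<in>D. \<Sum>s\<in>B. f p q r s)"
    by (rule sum.cong[OF refl], rule sum.cong[OF refl], rule sum.swap)
  also have "\<dots> = (\<Sum>p\<in>C. \<Sum>q\<in>D. \<Sum>r\<in>A. \<Sum>s\<in>B. f p q r s)"
    by (rule sum.cong[OF refl], rule sum.swap)
  finally show ?thesis .
qed

lemma sq_norm_nonneg: "0 \<le> sq_norm \<psi>"
  unfolding sq_norm_def by (intro sum_nonneg) simp

lemma max_ent_overlap_fst_rank2_le: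
  "max_ent_overlap_fst (rank2_vec x y u v) \<le> 2 * sq_norm (rank2_vec x y u v)"
proof -
  have "max_ent_overlap_fst (rank2_vec x y u v)
     \<le> (\<Sum>r\<in>UNIV. \<Sum>s\<in>UNIV. 2 * (\<Sum>p\<in>UNIV. \<Sum>q\<in>UNIV. (cmod (x p r * u q s + y p r * v q s))\<^sup>2))"
    unfolding max_ent_overlap_fst_def rank2_vec_def
    by (intro sum_mono)
      (rule cmod_trace_rank2_sq_le[OF finite_class.finite_UNIV, of "\<lambda>i. x i _" "\<lambda>i. u i _" "\<lambda>i. y i _" "\<lambda>i. v i _"])
  also have "\<dots> = 2 * sq_norm (rank2_vec x y u v)"
    unfolding sq_norm_def rank2_vec_def by (simp only: sum_distrib_left[symmetric]) (subst sum_swap_pairs, rule refl)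
  finally show ?thesis .
qed

lemma max_ent_overlap_snd_rank2_le:
  "max_ent_overlap_snd (rank2_vec x y u v) \<le> 2 * sq_norm (rank2_vec x y u v)"
proof -
  have "max_ent_overlap_snd (rank2_vec x y u v)
     \<le> (\<Sum>p\<in>UNIV. \<Sum>q\<in>UNIV. 2 * (\<Sum>r\<in>UNIV. \<Sum>s\<in>UNIV. (cmod (x p r * u q s + y p r * v q s))\<^sup>2))"
    unfolding max_ent_overlap_snd_def rank2_vec_def
    by (intro sum_mono)
      (rule cmod_trace_rank2_sq_le[OF finite_class.finite_UNIV, of "\<lambda>i. x _ i" "\<lambda>i. u _ i" "\<lambda>i. y _ i" "\<lambda>i. v _ i"])
  also have "\<dots> = 2 * sq_norm (rank2_vec x y u v)"
    unfolding sq_norm_def rank2_vec_def by (simp only: sum_distrib_left[symmetric])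
  finally show ?thesis .
qed

lemma quadratic_nonneg_of_half:
  fixes N A C t :: real
  assumes "0 \<le> N" and "A \<le> 4 * N" and "0 \<le> N - (1/2) * A + (1/2)\<^sup>2 * C"
    and "0 \<le> t" and "t \<le> 1/2"
  shows "0 \<le> N - t * A + t\<^sup>2 * C"
proof -
  have "t * A \<le> t * (4 * N)"
    using assms(2,4) by (rule mult_left_mono)
  also have "\<dots> \<le> (1 + 2 * t) * N"
    using mult_right_mono[of "2 * t" 1 N] assms(1,5) by (simp add: algebra_simps)
  finally have "0 \<le> (1 - 2 * t) * ((1 + 2 * t) * N - t * A)"
    using assms(5) by simp
  moreover have "N - t * A + t\<^sup>2 * C
      = (2 * t)\<^sup>2 * (N - (1/2) * A + (1/2)\<^sup>2 * C) + (1 - 2 * t) * ((1 + 2 * t) * N - t * A)"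
    by (simp add: algebra_simps power2_eq_square)
  ultimately show ?thesis
    using assms(3) by simp
qed

lemma werner_form_rank2_nonneg:
  assumes "0 \<le> t" and "t \<le> 1/2" and "0 \<le> werner_form (1/2) (rank2_vec x y u v)"
  shows "0 \<le> werner_form t (rank2_vec x y u v)"
  using quadratic_nonneg_of_half[OF sq_norm_nonneg _ assms(3)[unfolded werner_form_def] assms(1,2)]
    max_ent_overlap_fst_rank2_le[of x y u v] max_ent_overlap_snd_rank2_le[of x y u v]
  unfolding werner_form_def by linarith

theorem proposition2p1:
  assumes "CARD('n::finite) \<ge> 3"
  shows "(\<forall>t::real. 1 / real CARD('n) < t \<and> t \<le> 1/2 \<longrightarrow>
            \<not> k_distillable 2 (werner t :: 'n op))
         \<longleftrightarrow> (\<forall>x y u v :: 'n \<Rightarrow> 'n \<Rightarrow> complex. 0 \<le> Phi x y u v)"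
proof
  assume undistillable: "\<forall>t::real. 1 / real CARD('n) < t \<and> t \<le> 1/2 \<longrightarrow>
            \<not> k_distillable 2 (werner t :: 'n op)"
  have "1 / real CARD('n) < 1/2"
    using assms by (simp add: field_simps)
  with undistillable have "\<not> k_distillable 2 (werner (1/2) :: 'n op)"
    by blast
  then show "\<forall>x y u v :: 'n \<Rightarrow> 'n \<Rightarrow> complex. 0 \<le> Phi x y u v"
    by (auto simp: k_distillable_2_werner_iff Phi_eq_werner_form complex_of_real_nonneg_iff not_less)
next
  assume "\<forall>x y u v :: 'n \<Rightarrow> 'n \<Rightarrow> complex. 0 \<le> Phi x y u v"
  then have half: "0 \<le> werner_form (1/2) (rank2_vec x y u v)" for x y u v :: "'n \<Rightarrow> 'n \<Rightarrow> complex"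
    by (simp add: Phi_eq_werner_form complex_of_real_nonneg_iff)
  show "\<forall>t::real. 1 / real CARD('n) < t \<and> t \<le> 1/2 \<longrightarrow> \<not> k_distillable 2 (werner t :: 'n op)"
  proof (intro allI impI)
    fix t :: real
    assume t: "1 / real CARD('n) < t \<and> t \<le> 1/2"
    moreover have "0 \<le> 1 / real CARD('n)"
      by simp
    ultimately have "0 \<le> t"
      by linarith
    with t show "\<not> k_distillable 2 (werner t :: 'n op)"
      using werner_form_rank2_nonneg[OF _ _ half] by (simp add: k_distillable_2_werner_iff not_less)
  qed
qed

end
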